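(* Let $\beta>1$ and $U(x)=(|x|^2)^\beta$ on $\mathbb{R}^n$. Then for all $x,y\in\mathbb{R}^n$, $$\langle\nabla U(x)-\nabla U(y),x-y\rangle\ge 2\beta\,2^{3-3\beta}\,|x-y|^{2\beta}.$$ If $n=1$, the better bound $\langle\nabla U(x)-\nabla U(y),x-y\rangle\ge 2\beta\,2^{2-2\beta}|x-y|^{2\beta}$ holds. *)

theory Defs
  imports "HOL-Analysis.Analysis"
begin

end

theory Submission
  imports Defs
begin

text \<open>
  The gradient is \<nabla>U x = 2\<beta> |x|^s x with s = 2\<beta> - 2 \<ge> 0, so everything reduces to
  \<langle>|b|^s b - |a|^s a, b - a\<rangle> \<ge> 2^(-s) |b - a|^(s+2) in any real inner product space.
  Writing t = |b|, r = |a|, d = |b - a|, twice the left-hand side is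
  (t^s + r^s) d^2 + (t^s - r^s)(t^2 - r^2), an affine function of d^2 with nonnegative constant
  term. At d = t + r, the largest value the triangle inequality allows, it equals
  2 (t + r)(t^(s+1) + r^(s+1)) \<ge> 2^(1-s) (t + r)^s (t + r)^2 by convexity of u \<mapsto> u^(s+1);
  hence it dominates 2^(1-s) (t + r)^s d^2 \<ge> 2^(1-s) d^(s+2) throughout. The resulting constant
  2^(2-2\<beta>) holds in every dimension and dominates 2^(3-3\<beta>).
\<close>

lemma powr_midpoint_le:
  fixes t r q :: real
  assumes "t \<ge> 0" "r \<ge> 0" "q \<ge> 1"
  shows "((t + r) / 2) powr q \<le> (t powr q + r powr q) / 2"
proof (cases "t = 0 \<or> r = 0")
  \<comment> \<open>\<open>powr_convex\<close> only covers the open half-line\<close>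
  case True
  have "(x / 2) powr q \<le> x powr q / 2" if "x \<ge> 0" for x :: real
  proof -
    have "2 \<le> 2 powr q" using powr_mono[of 1 q 2] assms(3) by simp
    then have "x powr q / 2 powr q \<le> x powr q / 2" by (intro divide_left_mono) auto
    then show ?thesis using that by (simp add: powr_divide)
  qed
  then show ?thesis using True assms by auto
next
  case False
  then have "t > 0" "r > 0" using assms by auto
  with convex_onD[OF powr_convex[OF assms(3)], of "1/2" t r]
  show ?thesis by (simp add: field_simps)
qed

lemma affine_ge_linear_on_interval:
  fixes x M K \<alpha> \<gamma> :: real
  assumes "0 \<le> x" "x \<le> M" "0 \<le> \<gamma>" "K * M \<le> \<alpha> * M + \<gamma>"
  shows "K * x \<le> \<alpha> * x + \<gamma>"
proof (cases "K \<le> \<alpha>")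
  case True
  then show ?thesis using assms(1,3) by (simp add: mult_right_mono add_increasing2)
next
  case False
  then have "(\<alpha> - K) * M \<le> (\<alpha> - K) * x" using assms(2) by (simp add: mult_left_mono_neg)
  then show ?thesis using assms(4) by (simp add: algebra_simps)
qed

lemma inner_scaleR_diff_eq:
  fixes a b :: "'a::real_inner" and A B :: real
  shows "2 * inner (A *\<^sub>R b - B *\<^sub>R a) (b - a)
    = (A + B) * norm (b - a) ^ 2 + (A - B) * (norm b ^ 2 - norm a ^ 2)"
  by (simp add: power2_norm_eq_inner inner_commute algebra_simps)

lemma inner_norm_powr_scaleR_diff_ge:
  fixes a b :: "'a::real_inner" and s :: real
  assumes "s \<ge> 0"
  shows "2 powr (-s) * norm (b - a) powr (s + 2)
    \<le> inner (norm b powr s *\<^sub>R b - norm a powr s *\<^sub>R a) (b - a)"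
proof -
  define t r d m where "t = norm b" and "r = norm a" and "d = norm (b - a)" and "m = t + r"
  define K where "K = 2 powr (1 - s) * m powr s"
  have t0: "t \<ge> 0" and r0: "r \<ge> 0" and d0: "d \<ge> 0" and m0: "m \<ge> 0"
    unfolding t_def r_def d_def m_def by auto
  have "d \<le> m" unfolding d_def m_def t_def r_def by (rule norm_triangle_ineq4)
  have twice: "2 * inner (norm b powr s *\<^sub>R b - norm a powr s *\<^sub>R a) (b - a)
      = (t powr s + r powr s) * d^2 + (t powr s - r powr s) * (t^2 - r^2)"
    unfolding t_def r_def d_def by (rule inner_scaleR_diff_eq)
  have cross_nonneg: "(t powr s - r powr s) * (t^2 - r^2) \<ge> 0"
  proof (cases "t \<le> r")
    case True
    then have "t powr s \<le> r powr s" "t^2 \<le> r^2" using t0 assms by (simp_all add: powr_mono2 power_mono)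
    then show ?thesis by (simp add: mult_nonpos_nonpos)
  next
    case False
    then have "r powr s \<le> t powr s" "r^2 \<le> t^2" using r0 assms by (simp_all add: powr_mono2 power_mono)
    then show ?thesis by simp
  qed
  have "2 powr (-s) * m powr (s + 1) = 2 * (m / 2) powr (s + 1)"
    using m0 by (simp add: powr_divide powr_add powr_minus_divide)
  also have "\<dots> \<le> t powr (s + 1) + r powr (s + 1)"
    using powr_midpoint_le[OF t0 r0, of "s + 1"] assms unfolding m_def by simp
  finally have midpoint: "2 powr (-s) * m powr (s + 1) \<le> t powr (s + 1) + r powr (s + 1)" .
  have "K * m^2 = 2 * m * (2 powr (-s) * m powr (s + 1))"
    unfolding K_def using m0 by (simp add: powr_add powr_diff power2_eq_square powr_minus_divide)
  also have "\<dots> \<le> 2 * m * (t powr (s + 1) + r powr (s + 1))"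
    using midpoint m0 by (simp add: mult_left_mono)
  also have "\<dots> = (t powr s + r powr s) * m^2 + (t powr s - r powr s) * (t^2 - r^2)"
    using t0 r0 unfolding m_def by (simp add: powr_add power2_eq_square algebra_simps)
  finally have endpoint: "K * m^2 \<le> (t powr s + r powr s) * m^2 + (t powr s - r powr s) * (t^2 - r^2)" .
  have "d^2 \<le> m^2" using \<open>d \<le> m\<close> d0 by (rule power_mono)
  from affine_ge_linear_on_interval[OF _ this cross_nonneg endpoint]
  have "K * d^2 \<le> (t powr s + r powr s) * d^2 + (t powr s - r powr s) * (t^2 - r^2)"
    by simp
  moreover have "2 powr (1 - s) * d powr (s + 2) \<le> K * d^2"
    unfolding K_def using d0 \<open>d \<le> m\<close> assms
    by (simp add: powr_add powr_mono2 mult_left_mono mult_right_mono mult.assoc)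
  ultimately show ?thesis
    using twice unfolding d_def by (simp add: powr_diff powr_minus_divide)
qed

lemma square_powr:
  fixes y c :: real
  assumes "y \<ge> 0"
  shows "(y^2) powr c = y powr (2 * c)"
  using assms by (metis powr_numeral powr_powr)

lemma gderiv_norm_square_powr:
  fixes \<beta> :: real and x :: "'a::real_inner"
  assumes "\<beta> > 1/2"
  shows "GDERIV (\<lambda>x. (norm x ^ 2) powr \<beta>) x :> (2 * \<beta> * norm x powr (2 * \<beta> - 2)) *\<^sub>R x"
proof (cases "x = 0")
  case False
  have "GDERIV (\<lambda>y. norm y ^ 2) x :> 2 *\<^sub>R x"
    unfolding gderiv_def power2_norm_eq_inner
    by (rule derivative_eq_intros | force simp add: inner_commute)+
  from GDERIV_DERIV_compose[OF this has_real_derivative_powr[of "norm x ^ 2" \<beta>]] False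
  have "GDERIV (\<lambda>y. (norm y ^ 2) powr \<beta>) x :> (\<beta> * (norm x ^ 2) powr (\<beta> - 1)) *\<^sub>R 2 *\<^sub>R x"
    by simp
  then show ?thesis by (simp add: square_powr algebra_simps)
next
  case True
  have "((\<lambda>h::'a. norm h powr (2 * \<beta> - 1)) \<longlongrightarrow> 0) (at 0)"
    by (rule tendsto_zero_powrI) (use assms in \<open>auto intro!: tendsto_eq_intros\<close>)
  moreover have "norm h powr (2 * \<beta> - 1) = norm ((norm h ^ 2) powr \<beta>) / norm h" if "h \<noteq> 0" for h :: 'a
    using that by (simp add: square_powr powr_diff)
  ultimately have "((\<lambda>h::'a. norm ((norm h ^ 2) powr \<beta>) / norm h) \<longlongrightarrow> 0) (at 0)"
    by (simp add: Lim_transform_eventually eventually_at_filter)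
  then show ?thesis
    unfolding gderiv_def has_derivative_at using True by (simp add: bounded_linear_inner_left)
qed

lemma gderiv_unique:
  assumes "GDERIV f x :> D" "GDERIV f x :> D'"
  shows "D = D'"
proof -
  have "(\<lambda>h. inner h D) = (\<lambda>h. inner h D')"
    using has_derivative_unique assms unfolding gderiv_def by blast
  then have "inner (D - D') D = inner (D - D') D'" by (metis inner_commute)
  then have "inner (D - D') (D - D') = 0" by (simp add: inner_diff_right)
  then show ?thesis by simp
qed

theorem proposition5p4:
  fixes \<beta> :: real and U :: "real ^ 'n \<Rightarrow> real"
  assumes "\<beta> > 1"
    and "U = (\<lambda>x. (norm x ^ 2) powr \<beta>)"
  shows "(\<forall>x. \<exists>D. GDERIV U x :> D)
    \<and> (\<forall>x y Dx Dy. GDERIV U x :> Dx \<longrightarrow> GDERIV U y :> Dy \<longrightarrow>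
          inner (Dx - Dy) (x - y) \<ge> 2 * \<beta> * 2 powr (3 - 3 * \<beta>) * norm (x - y) powr (2 * \<beta>))
    \<and> (CARD('n) = 1 \<longrightarrow>
        (\<forall>x y Dx Dy. GDERIV U x :> Dx \<longrightarrow> GDERIV U y :> Dy \<longrightarrow>
          inner (Dx - Dy) (x - y) \<ge> 2 * \<beta> * 2 powr (2 - 2 * \<beta>) * norm (x - y) powr (2 * \<beta>)))"
proof -
  define s where "s = 2 * \<beta> - 2"
  have grad: "GDERIV U x :> (2 * \<beta>) *\<^sub>R (norm x powr s *\<^sub>R x)" for x
    unfolding assms(2) s_def using assms(1) by (simp add: gderiv_norm_square_powr)
  have sharp: "2 * \<beta> * 2 powr (2 - 2 * \<beta>) * norm (x - y) powr (2 * \<beta>) \<le> inner (Dx - Dy) (x - y)"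
    if "GDERIV U x :> Dx" "GDERIV U y :> Dy" for x y Dx Dy
  proof -
    have "Dx - Dy = (2 * \<beta>) *\<^sub>R (norm x powr s *\<^sub>R x - norm y powr s *\<^sub>R y)"
      using gderiv_unique[OF that(1) grad] gderiv_unique[OF that(2) grad] by (simp add: scaleR_diff_right)
    moreover have "2 powr (-s) * norm (x - y) powr (s + 2)
        \<le> inner (norm x powr s *\<^sub>R x - norm y powr s *\<^sub>R y) (x - y)"
      using assms(1) s_def by (intro inner_norm_powr_scaleR_diff_ge) simp
    ultimately show ?thesis using assms(1) by (simp add: s_def mult_left_mono)
  qed
  have "2 * \<beta> * 2 powr (3 - 3 * \<beta>) * c \<le> 2 * \<beta> * 2 powr (2 - 2 * \<beta>) * c" if "c \<ge> 0" for c :: real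
    using assms(1) that by (intro mult_right_mono mult_left_mono powr_mono) auto
  then show ?thesis using sharp grad by (meson order_trans powr_ge_zero)
qed

end
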